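(* Consider searching on a line with turn cost $t$ and lower bound $\lambda>0$. If $\frac{t}{2\lambda}>1$, then every search strategy has competitive ratio strictly greater than $9$.
   Context: Searching on a line with turn cost. Fix $\lambda>0$, $t\ge 0$. A search strategy is a sequence $\mathcal S(i)=(x_i,r_i)$, $i\ge1$, with $x_i>0$, $r_i\in\{\mathrm{left},\mathrm{right}\}$ and $\sup\{x_i:r_i=\mathrm{left}\}=\sup\{x_i:r_i=\mathrm{right}\}=\infty$. At step $i$ the searcher walks distance $x_i$ from the origin along ray $r_i$ and, if the target is not found, walks back to the origin, paying an additional turn cost $t$; thus each unsuccessful step costs $2x_i+t$. The target is on one of the two rays at unknown distance $D\ge\lambda$ and is found at the first step $j$ with $r_j$ equal to its ray and $x_j\ge D$; the total cost is then $\sum_{i=1}^{j-1}(2x_i+t)+D$. The competitive ratio of $\mathcal S$ is the supremum over all target positions of total cost divided by $D$. *)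

theory Defs
  imports "HOL-Analysis.Analysis"
begin

datatype ray = Left | Right

text \<open>A search strategy: step i (for i \<ge> 1) is the pair (x_i, r_i).
  The value at index 0 is ignored.\<close>
type_synonym strategy = "nat \<Rightarrow> real \<times> ray"

definition is_strategy :: "strategy \<Rightarrow> bool" where
  "is_strategy S \<longleftrightarrow>
     (\<forall>i\<ge>1. fst (S i) > 0) \<and>
     (\<forall>r. \<forall>M::real. \<exists>i\<ge>1. snd (S i) = r \<and> fst (S i) > M)"

definition find_step :: "strategy \<Rightarrow> ray \<Rightarrow> real \<Rightarrow> nat" where
  "find_step S r D = (LEAST j. j \<ge> 1 \<and> snd (S j) = r \<and> fst (S j) \<ge> D)"

definition search_cost :: "real \<Rightarrow> strategy \<Rightarrow> ray \<Rightarrow> real \<Rightarrow> real" where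
  "search_cost t S r D = (\<Sum>i\<in>{1..<find_step S r D}. 2 * fst (S i) + t) + D"

definition comp_ratio :: "real \<Rightarrow> real \<Rightarrow> strategy \<Rightarrow> ereal" where
  "comp_ratio lam t S =
     (SUP p \<in> {(r, D). D \<ge> lam}. ereal (search_cost t S (fst p) (snd p) / snd p))"

end

theory Submission
  imports Defs
begin

(*
  Suppose a strategy S had competitive ratio at most 9.  Write x_i for the
  step lengths, v_n = max(x_1,..,x_n) for the running maximum and T_n = sum_{i<=n}(2x_i+t)
  for the cost of the first n steps.  If step n+1 is a record (x_{n+1} > v_n), then no step
  up to n+1 on the opposite ray exceeded v_n, so a target just beyond max(lam, v_n) on that
  ray costs at least T_{n+1}; ratio 9 forces T_{n+1} <= 8 max(lam, v_n).

  The
  slack P_n = T_n - 4 v_n + t stays above -t (here t > 2 lam is used), grows by at least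
  min(P_n + t, t) per step once v_n >= lam, hence becomes positive; from then on the ratio
  P_n / v_n never decreases, is below 2 just before every record, and grows by its square
  over 4 at every record.  Hence only finitely many records occur and the step lengths are
  bounded, contradicting the definition of a strategy.
*)

fun running_max :: "(nat \<Rightarrow> real) \<Rightarrow> nat \<Rightarrow> real" where
  "running_max x 0 = 0"
| "running_max x (Suc n) = max (running_max x n) (x (Suc n))"

definition prefix_cost :: "real \<Rightarrow> (nat \<Rightarrow> real) \<Rightarrow> nat \<Rightarrow> real" where
  "prefix_cost t x n = (\<Sum>i\<in>{1..n}. 2 * x i + t)"

lemma prefix_cost_Suc: "prefix_cost t x (Suc n) = prefix_cost t x n + 2 * x (Suc n) + t"
  by (simp add: prefix_cost_def)

lemma running_max_ge: "1 \<le> i \<Longrightarrow> i \<le> n \<Longrightarrow> x i \<le> running_max x n"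
proof (induction n)
  case (Suc n)
  then show ?case by (cases "i = Suc n") auto
qed simp

lemma running_max_mono: "m \<le> n \<Longrightarrow> running_max x m \<le> running_max x n"
  by (induction n rule: dec_induct) (auto intro: order_trans)

lemma running_max_bounds_all:
  assumes no_record: "\<And>i. n \<le> i \<Longrightarrow> x (Suc i) \<le> running_max x i" and "1 \<le> j"
  shows "x j \<le> running_max x n"
proof -
  have stable: "running_max x i = running_max x n" if "n \<le> i" for i
    using that
  proof (induction i rule: dec_induct)
    case (step i)
    then show ?case using no_record[of i] by simp
  qed simp
  show ?thesis
  proof (cases "j \<le> n")
    case True
    then show ?thesis using running_max_ge \<open>1 \<le> j\<close> by blast
  next
    case False
    then have "j = Suc (j - 1)" "n \<le> j - 1" by auto
    then show ?thesis using no_record[of "j - 1"] stable[of "j - 1"] by simp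
  qed
qed

lemma record_ratio_growth:
  fixes V X P P' :: real
  assumes "0 < V" "V < X" "X \<le> 2 * V - P / 2" "2 * P \<le> P'" "0 < P"
  shows "P / V < 2" and "P / V + (P / V)^2 / 4 \<le> P' / X"
proof -
  have PV: "P < 2 * V" using assms by linarith
  then show "P / V < 2" using assms by (simp add: divide_simps)
  have X0: "0 < X" using assms by linarith
  have den: "0 < 4 * V - P" using PV assms by linarith
  have "P / V + (P / V)^2 / 4 = (4 * P * V + P^2) / (4 * V^2)"
    using assms by (simp add: field_simps power2_eq_square)
  also have "\<dots> \<le> 4 * P / (4 * V - P)"
  proof -
    have "(4 * P * V + P^2) * (4 * V - P) = 16 * P * V^2 - P^3"
      by (simp add: algebra_simps power2_eq_square power3_eq_cube)
    then have "(4 * P * V + P^2) * (4 * V - P) \<le> 4 * P * (4 * V^2)"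
      using assms by simp
    then show ?thesis using den assms by (simp add: divide_simps)
  qed
  also have "\<dots> = 2 * P / (2 * V - P / 2)" by (simp add: field_simps)
  also have "\<dots> \<le> 2 * P / X" using assms X0 by (intro divide_left_mono) auto
  also have "\<dots> \<le> P' / X" using assms X0 by (simp add: divide_right_mono)
  finally show "P / V + (P / V)^2 / 4 \<le> P' / X" .
qed

text \<open>Positive step lengths x_1, x_2, ... such that every record step n+1 satisfies the
  bound imposed by competitive ratio 9: the cost of the first n+1 steps is at most
  8 max(lam, v_n).\<close>
locale cheap_records =
  fixes x :: "nat \<Rightarrow> real" and t lam :: real
  assumes lam_pos: "0 < lam"
    and large_turn_cost: "2 * lam < t"
    and steps_pos: "\<And>i. 1 \<le> i \<Longrightarrow> 0 < x i"
    and record_cost: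
      "\<And>n. running_max x n < x (Suc n) \<Longrightarrow> prefix_cost t x (Suc n) \<le> 8 * max lam (running_max x n)"
begin

abbreviation v :: "nat \<Rightarrow> real" where "v \<equiv> running_max x"
abbreviation T :: "nat \<Rightarrow> real" where "T \<equiv> prefix_cost t x"

text \<open>The slack of the record bound; it is the quantity that grows along the strategy.\<close>
definition slack :: "nat \<Rightarrow> real" where "slack n = T n - 4 * v n + t"

lemma slack_Suc: "slack (Suc n) = slack n + 2 * x (Suc n) + t + 4 * v n - 4 * v (Suc n)"
  by (simp add: slack_def prefix_cost_Suc)

lemma slack_plain_step:
  assumes "x (Suc n) \<le> v n"
  shows "slack n + t \<le> slack (Suc n)"
  using assms steps_pos[of "Suc n"] by (simp add: slack_Suc max_def)

lemma slack_record_step: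
  assumes new_max: "v n < x (Suc n)" and big: "lam \<le> v n"
  shows "x (Suc n) \<le> 2 * v n - slack n / 2" and "2 * slack n + t \<le> slack (Suc n)"
proof -
  have "T (Suc n) \<le> 8 * v n" using record_cost[OF new_max] big by simp
  moreover have "v (Suc n) = x (Suc n)" using new_max by simp
  ultimately show "x (Suc n) \<le> 2 * v n - slack n / 2" "2 * slack n + t \<le> slack (Suc n)"
    by (simp_all add: slack_def prefix_cost_Suc field_simps)
qed

lemma prefix_cost_nonneg: "0 \<le> T n"
  unfolding prefix_cost_def
proof (intro sum_nonneg)
  fix i assume "i \<in> {1..n}"
  then show "0 \<le> 2 * x i + t" using steps_pos[of i] large_turn_cost lam_pos by simp
qed

text \<open>The slack never drops to -t; this is where the hypothesis t > 2 lam enters.\<close>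
lemma slack_gt: "- t < slack n"
proof (induction n)
  case 0
  then show ?case using large_turn_cost lam_pos by (simp add: slack_def prefix_cost_def)
next
  case (Suc n)
  show ?case
  proof (cases "v n < x (Suc n)")
    case new_max: True
    show ?thesis
    proof (cases "lam \<le> v n")
      case True
      then show ?thesis using slack_record_step(2)[OF new_max True] Suc by linarith
    next
      case False
      then have "T (Suc n) \<le> 8 * lam" using record_cost[OF new_max] by simp
      then show ?thesis using new_max prefix_cost_nonneg[of n] large_turn_cost
        by (simp add: slack_def prefix_cost_Suc)
    qed
  next
    case False
    then show ?thesis using slack_plain_step[of n] Suc large_turn_cost lam_pos by linarith
  qed
qed

lemma slack_growth:
  assumes "lam \<le> v n"
  shows "slack n + min (slack n + t) t \<le> slack (Suc n)"
  using slack_record_step(2)[OF _ assms] slack_plain_step[of n] by (cases "v n < x (Suc n)") auto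

lemma slack_mono:
  assumes "lam \<le> v m" "m \<le> n"
  shows "slack m \<le> slack n"
  using assms(2)
proof (induction n rule: dec_induct)
  case (step n)
  have "lam \<le> v n" using assms(1) running_max_mono[OF step(1), of x] by linarith
  then show ?case using slack_growth[of n] slack_gt[of n] large_turn_cost lam_pos step(3)
    by linarith
qed simp

text \<open>Once the steps have passed lam, the slack increases by a fixed amount per step and
  therefore eventually becomes positive.\<close>
lemma slack_eventually_pos:
  assumes big: "lam \<le> v m"
  shows "\<exists>n\<ge>m. 0 < slack n"
proof -
  define \<mu> where "\<mu> = min (slack m + t) t"
  have \<mu>: "0 < \<mu>" using slack_gt[of m] large_turn_cost lam_pos by (simp add: \<mu>_def)
  have linear: "slack m + real k * \<mu> \<le> slack (m + k)" for k
  proof (induction k)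
    case (Suc k)
    have "lam \<le> v (m + k)" using big running_max_mono[OF le_add1] by (rule order_trans)
    moreover have "slack m \<le> slack (m + k)" using slack_mono[OF big] by simp
    ultimately have "slack (m + k) + \<mu> \<le> slack (Suc (m + k))"
      using slack_growth[of "m + k"] by (simp add: \<mu>_def)
    then show ?case using Suc by (simp add: algebra_simps)
  qed simp
  obtain k where "t < real k * \<mu>" using ex_less_of_nat_mult[OF \<mu>] by blast
  then have "0 < slack (m + k)" using linear[of k] slack_gt[of m] by linarith
  then show ?thesis by (intro exI[of _ "m + k"]) simp
qed

definition ratio :: "nat \<Rightarrow> real" where "ratio n = slack n / v n"

lemma ratio_step:
  assumes big: "lam \<le> v n" and pos: "0 < slack n"
  shows "ratio n \<le> ratio (Suc n)"
    and "v n < x (Suc n) \<Longrightarrow> ratio n < 2 \<and> ratio n + (ratio n)^2 / 4 \<le> ratio (Suc n)"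
proof -
  have v_pos: "0 < v n" using big lam_pos by linarith
  show at_record: "ratio n < 2 \<and> ratio n + (ratio n)^2 / 4 \<le> ratio (Suc n)"
    if new_max: "v n < x (Suc n)"
  proof -
    have "2 * slack n \<le> slack (Suc n)"
      using slack_record_step(2)[OF new_max big] large_turn_cost lam_pos by linarith
    from record_ratio_growth[OF v_pos new_max slack_record_step(1)[OF new_max big] this pos]
    show ?thesis using new_max by (simp add: ratio_def)
  qed
  show "ratio n \<le> ratio (Suc n)"
  proof (cases "v n < x (Suc n)")
    case True
    then have "ratio n + (ratio n)^2 / 4 \<le> ratio (Suc n)" using at_record by blast
    moreover have "0 \<le> (ratio n)^2 / 4" by simp
    ultimately show ?thesis by linarith
  next
    case False
    then have "slack n \<le> slack (Suc n)" "v (Suc n) = v n"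
      using slack_plain_step[of n] large_turn_cost lam_pos by (auto simp: max_def)
    then show ?thesis using v_pos by (simp add: ratio_def divide_right_mono)
  qed
qed

text \<open>Since the ratio is below 2 before each record but gains a fixed amount at each record,
  records eventually stop.\<close>
lemma finitely_many_records:
  assumes big: "lam \<le> v m"
  shows "\<exists>N. \<forall>i\<ge>N. x (Suc i) \<le> v i"
proof (rule ccontr)
  assume "\<not> ?thesis"
  then have records: "\<exists>i\<ge>n. v i < x (Suc i)" for n by (auto simp: not_le)
  obtain N where "m \<le> N" and N_pos: "0 < slack N"
    using slack_eventually_pos[OF big] by blast
  then have N_big: "lam \<le> v N" using big running_max_mono[of m N x] by linarith
  have later: "lam \<le> v n \<and> 0 < slack n" if "N \<le> n" for n
    using N_big N_pos running_max_mono[OF that, of x] slack_mono[OF N_big that] by linarith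
  have ratio_mono: "ratio i \<le> ratio j" if "N \<le> i" "i \<le> j" for i j
    using that(2)
  proof (induction j rule: dec_induct)
    case (step j)
    then show ?case using ratio_step(1)[of j] later[of j] that(1) by simp
  qed simp
  define r0 where "r0 = ratio N"
  have r0: "0 < r0" using N_pos N_big lam_pos by (simp add: r0_def ratio_def)
  have climb: "\<exists>n\<ge>N. r0 + real K * (r0^2 / 4) \<le> ratio n" for K
  proof (induction K)
    case 0
    then show ?case by (auto simp: r0_def)
  next
    case (Suc K)
    then obtain n where n: "N \<le> n" "r0 + real K * (r0^2 / 4) \<le> ratio n" by blast
    obtain i where i: "n \<le> i" "v i < x (Suc i)" using records by blast
    have "r0 \<le> ratio i" using ratio_mono[of N i] n i by (simp add: r0_def)
    then have "r0^2 / 4 \<le> (ratio i)^2 / 4" using r0 by (simp add: power_mono)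
    moreover have "ratio i + (ratio i)^2 / 4 \<le> ratio (Suc i)"
      using ratio_step(2)[of i] later[of i] n i by simp
    moreover have "ratio n \<le> ratio i" using ratio_mono n i by simp
    moreover have "real (Suc K) * (r0^2 / 4) = real K * (r0^2 / 4) + r0^2 / 4"
      by (simp add: algebra_simps)
    ultimately have "r0 + real (Suc K) * (r0^2 / 4) \<le> ratio (Suc i)"
      using n by linarith
    then show ?case using n i by (intro exI[of _ "Suc i"]) simp
  qed
  have "0 < r0^2 / 4" using r0 by simp
  then obtain K where K: "2 < real K * (r0^2 / 4)" using ex_less_of_nat_mult by blast
  obtain n where n: "N \<le> n" "r0 + real K * (r0^2 / 4) \<le> ratio n" using climb by blast
  obtain i where i: "n \<le> i" "v i < x (Suc i)" using records by blast
  have "ratio n \<le> ratio i" using ratio_mono n i by simp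
  moreover have "ratio i < 2" using ratio_step(2)[of i] later[of i] n i by simp
  ultimately show False using n K r0 by simp
qed

lemma steps_bounded:
  assumes "1 \<le> j" "lam \<le> x j"
  shows "\<exists>M. \<forall>i\<ge>1. x i \<le> M"
proof -
  have "lam \<le> v j" using assms running_max_ge[of j j x] by simp
  then obtain N where "\<forall>i\<ge>N. x (Suc i) \<le> v i" using finitely_many_records by blast
  then show ?thesis using running_max_bounds_all by blast
qed

end

lemma search_cost_le_comp_ratio:
  assumes "lam \<le> D" and "0 < D" and ratio: "comp_ratio lam t S \<le> ereal c"
  shows "search_cost t S r D \<le> c * D"
proof -
  have "(r, D) \<in> {(r, D). lam \<le> D}" using assms by simp
  then have "ereal (search_cost t S r D / D) \<le> comp_ratio lam t S"
    unfolding comp_ratio_def by (rule SUP_upper2) simp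
  then have "ereal (search_cost t S r D / D) \<le> ereal c" using ratio by (rule order_trans)
  then have "search_cost t S r D / D \<le> c" by simp
  then show ?thesis using \<open>0 < D\<close> by (simp add: divide_simps)
qed

lemma find_step_finds:
  assumes "is_strategy S"
  shows "1 \<le> find_step S r D \<and> snd (S (find_step S r D)) = r \<and> D \<le> fst (S (find_step S r D))"
proof -
  obtain i where i: "1 \<le> i" "snd (S i) = r" "D < fst (S i)"
    using assms unfolding is_strategy_def by blast
  show ?thesis unfolding find_step_def by (rule LeastI[of _ i]) (use i in simp)
qed

text \<open>A target beyond every step taken on its ray during steps 1..k is found only after
  step k, so its cost includes the full cost of those steps.\<close>
lemma prefix_cost_le_search_cost:
  assumes S: "is_strategy S" and "0 \<le> t"
    and short: "\<forall>i\<in>{1..k}. snd (S i) = r \<longrightarrow> fst (S i) < D"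
  shows "prefix_cost t (\<lambda>i. fst (S i)) k + D \<le> search_cost t S r D"
proof -
  define j where "j = find_step S r D"
  have j: "1 \<le> j" "snd (S j) = r" "D \<le> fst (S j)"
    using find_step_finds[OF S] unfolding j_def by blast+
  have "k < j"
  proof (rule ccontr)
    assume "\<not> k < j"
    then have "j \<in> {1..k}" using j(1) by simp
    then have "fst (S j) < D" using short j(2) by blast
    then show False using j(3) by simp
  qed
  have "0 \<le> 2 * fst (S i) + t" if "1 \<le> i" for i
    using S that \<open>0 \<le> t\<close> unfolding is_strategy_def by (smt (verit))
  then have "prefix_cost t (\<lambda>i. fst (S i)) k \<le> (\<Sum>i\<in>{1..<j}. 2 * fst (S i) + t)"
    unfolding prefix_cost_def using \<open>k < j\<close> by (intro sum_mono2) auto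
  then show ?thesis unfolding search_cost_def j_def by simp
qed

text \<open>Placing the target just beyond max(lam, M) on a ray whose first k steps are at most M
  shows that these k steps cost at most 8 max(lam, M).\<close>
lemma prefix_cost_bound:
  assumes lam: "0 < lam" and "0 \<le> t" and S: "is_strategy S"
    and ratio: "comp_ratio lam t S \<le> 9"
    and short: "\<forall>i\<in>{1..k}. snd (S i) = r \<longrightarrow> fst (S i) \<le> M"
  shows "prefix_cost t (\<lambda>i. fst (S i)) k \<le> 8 * max lam M"
proof -
  have bound: "prefix_cost t (\<lambda>i. fst (S i)) k \<le> 8 * D" if D: "max lam M < D" for D
  proof -
    have "\<forall>i\<in>{1..k}. snd (S i) = r \<longrightarrow> fst (S i) < D"
      using short D by (meson le_less_trans max.strict_boundedE)
    then have "prefix_cost t (\<lambda>i. fst (S i)) k + D \<le> search_cost t S r D"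
      by (rule prefix_cost_le_search_cost[OF S \<open>0 \<le> t\<close>])
    also have "\<dots> \<le> 9 * D"
      using D lam ratio by (intro search_cost_le_comp_ratio) auto
    finally show ?thesis by simp
  qed
  have "prefix_cost t (\<lambda>i. fst (S i)) k / 8 \<le> max lam M"
    by (rule dense_ge) (use bound in fastforce)
  then show ?thesis by simp
qed

text \<open>A strategy of competitive ratio at most 9 has cheap records: at a record step n+1
  the opposite ray has been explored no further than v_n, so prefix_cost_bound applies.\<close>
lemma cheap_records_of_ratio_9:
  assumes lam: "0 < lam" and turn: "2 * lam < t" and S: "is_strategy S"
    and ratio: "comp_ratio lam t S \<le> 9"
  shows "cheap_records (\<lambda>i. fst (S i)) t lam"
proof (unfold_locales)
  show "0 < lam" by (fact lam)
  show "2 * lam < t" by (fact turn)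
  show "\<And>i. 1 \<le> i \<Longrightarrow> 0 < fst (S i)" using S unfolding is_strategy_def by blast
next
  fix n
  let ?x = "\<lambda>i. fst (S i)"
  assume new_max: "running_max ?x n < ?x (Suc n)"
  define r where "r = (if snd (S (Suc n)) = Left then Right else Left)"
  have "\<forall>i\<in>{1..Suc n}. snd (S i) = r \<longrightarrow> fst (S i) \<le> running_max ?x n"
  proof (intro ballI impI)
    fix i assume i: "i \<in> {1..Suc n}" "snd (S i) = r"
    then have "i \<noteq> Suc n" unfolding r_def by (cases "snd (S (Suc n))") auto
    then show "fst (S i) \<le> running_max ?x n" using running_max_ge[of i n ?x] i by simp
  qed
  then show "prefix_cost t ?x (Suc n) \<le> 8 * max lam (running_max ?x n)"
    using prefix_cost_bound[OF lam _ S ratio] turn lam by simp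
qed

theorem lemma2:
  fixes lam t :: real and S :: strategy
  assumes "lam > 0" and "t \<ge> 0" and "t / (2 * lam) > 1" and "is_strategy S"
  shows "comp_ratio lam t S > 9"
proof (rule ccontr)
  assume "\<not> comp_ratio lam t S > 9"
  then have ratio: "comp_ratio lam t S \<le> 9" by simp
  have turn: "2 * lam < t" using assms(1,3) by (simp add: divide_simps)
  interpret cheap_records "\<lambda>i. fst (S i)" t lam
    using cheap_records_of_ratio_9[OF assms(1) turn assms(4) ratio] .
  obtain j where "1 \<le> j" "lam < fst (S j)"
    using assms(4) unfolding is_strategy_def by blast
  then obtain M where "\<forall>i\<ge>1. fst (S i) \<le> M" using steps_bounded by fastforce
  moreover obtain i where "1 \<le> i" "M < fst (S i)"
    using assms(4) unfolding is_strategy_def by blast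
  ultimately show False by fastforce
qed

end
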